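(* Let $f(1),f(2),\dots$ be a non-negative, non-decreasing sequence of real numbers with $f(1)=0$, and define $a(n):=n\sum_{i=1}^{n} f(i)/i^2$ for $n\ge1$. Then $a(n)\ge 0$ for all $n\ge1$, and for every $n\ge 2$, $$a(n)\le \frac{a(n-1)+a(n+1)}{2}.$$ *)

theory Defs
  imports Complex_Main
begin

definition seq_a :: "(nat \<Rightarrow> real) \<Rightarrow> nat \<Rightarrow> real" where
  "seq_a f n = real n * (\<Sum>i=1..n. f i / (real i)^2)"

end

theory Submission
  imports Defs
begin

text \<open>Writing \<open>a(n) = n S(n)\<close> with \<open>S\<close> the partial sums of \<open>f(i)/i\<^sup>2\<close>, the second
  difference telescopes to \<open>a(n) + a(n+2) - 2 a(n+1) = f(n+2)/(n+2) - n f(n+1)/(n+1)\<^sup>2\<close>.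
  Since \<open>n (n+2) \<le> (n+1)\<^sup>2\<close>, the subtracted term is at most \<open>f(n+1)/(n+2)\<close>, which
  monotonicity bounds by \<open>f(n+2)/(n+2)\<close>.\<close>

lemma seq_a_nonneg:
  assumes "\<And>i. i \<ge> 1 \<Longrightarrow> f i \<ge> 0"
  shows "seq_a f n \<ge> 0"
  unfolding seq_a_def
  by (intro mult_nonneg_nonneg sum_nonneg divide_nonneg_nonneg) (auto intro: assms)

lemma seq_a_second_difference:
  "seq_a f n + seq_a f (n + 2) - 2 * seq_a f (n + 1)
     = f (n + 2) / real (n + 2) - real n * f (n + 1) / (real (n + 1))\<^sup>2"
proof -
  define S where "S = (\<Sum>i=1..n. f i / (real i)\<^sup>2)"
  have sum_Suc: "(\<Sum>i=1..n + 1. f i / (real i)\<^sup>2) = S + f (n + 1) / (real (n + 1))\<^sup>2"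
    by (simp add: S_def)
  have sum_Suc_Suc: "(\<Sum>i=1..n + 2. f i / (real i)\<^sup>2)
      = S + f (n + 1) / (real (n + 1))\<^sup>2 + f (n + 2) / (real (n + 2))\<^sup>2"
    using sum_Suc by (simp add: numeral_2_eq_2)
  have "seq_a f n + seq_a f (n + 2) - 2 * seq_a f (n + 1)
      = real n * S + real (n + 2) * (S + f (n + 1) / (real (n + 1))\<^sup>2 + f (n + 2) / (real (n + 2))\<^sup>2)
        - 2 * (real (n + 1) * (S + f (n + 1) / (real (n + 1))\<^sup>2))"
    unfolding seq_a_def sum_Suc sum_Suc_Suc S_def ..
  also have "\<dots> = f (n + 2) / real (n + 2) - real n * f (n + 1) / (real (n + 1))\<^sup>2"
    by (simp add: divide_simps power2_eq_square) (simp add: algebra_simps)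
  finally show ?thesis .
qed

lemma seq_a_midpoint_convex:
  assumes nonneg: "f (n + 1) \<ge> 0" and mono: "f (n + 1) \<le> f (n + 2)"
  shows "seq_a f (n + 1) \<le> (seq_a f n + seq_a f (n + 2)) / 2"
proof -
  have "real n * real (n + 2) \<le> (real (n + 1))\<^sup>2"
    by (simp add: power2_eq_square algebra_simps)
  then have "real n / (real (n + 1))\<^sup>2 \<le> 1 / real (n + 2)"
    by (simp add: field_simps)
  then have "real n * f (n + 1) / (real (n + 1))\<^sup>2 \<le> f (n + 1) / real (n + 2)"
    using mult_left_mono[OF _ nonneg] by (metis times_divide_eq_left times_divide_eq_right mult.commute mult.right_neutral)
  also have "\<dots> \<le> f (n + 2) / real (n + 2)"
    using mono by (simp add: divide_right_mono)
  finally show ?thesis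
    using seq_a_second_difference[of f n] by simp
qed

theorem claim6p2:
  fixes f :: "nat \<Rightarrow> real"
  assumes nonneg: "\<And>n. n \<ge> 1 \<Longrightarrow> f n \<ge> 0"
    and mono: "\<And>m n. 1 \<le> m \<Longrightarrow> m \<le> n \<Longrightarrow> f m \<le> f n"
    and f1: "f 1 = 0"
  shows "(\<forall>n\<ge>1. seq_a f n \<ge> 0) \<and>
         (\<forall>n\<ge>2. seq_a f n \<le> (seq_a f (n - 1) + seq_a f (n + 1)) / 2)"
proof (intro conjI allI impI)
  fix n :: nat
  show "seq_a f n \<ge> 0" using seq_a_nonneg[OF nonneg] .
next
  fix n :: nat assume "n \<ge> 2"
  define m where "m = n - 1"
  then have n: "n = m + 1" and "m \<ge> 1"
    using \<open>n \<ge> 2\<close> by auto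
  then have "f (m + 1) \<ge> 0" "f (m + 1) \<le> f (m + 2)"
    using nonneg mono by auto
  then show "seq_a f n \<le> (seq_a f (n - 1) + seq_a f (n + 1)) / 2"
    using seq_a_midpoint_convex[of f m] by (simp add: n add.assoc)
qed

end
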